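(* Let $S=\mathcal{M}^0(I,J,G,P)$ be a regular Rees matrix semigroup with $|I|=m$, $|J|=n$, normalized so that $p_{11}=1$ and $p_{1l}\in\{0,1\}$ for all $l\in I$. Let $\sigma:G\to GL_k(\mathbb{C})$ be a matrix representation of $G$, and let $\pi^l,\pi^r$ be the associated standard representations of $S$. If both $\pi^l$ and $\pi^r$ are semiunitary, then (1) $\sigma$ is unitary, i.e. $\sigma(a)\sigma(a)^{*}=E$ for all $a\in G$, and (2) $S$ is an inverse semigroup.
   Context: Let $I=\{1,\dots,m\}$, $J=\{1,\dots,n\}$, $G$ a finite group, $G^0=G\cup\{0\}$, and $P=(p_{ji})$ an $n\times m$ matrix ($j\in J$, $i\in I$) with entries in $G^0$. $\mathcal{M}^0(I,J,G,P)$ consists of the elements $(a)_{ij}$ ($a\in G$, $i\in I$, $j\in J$; the $I\times J$ matrix with $a$ in entry $(i,j)$ and $0$ elsewhere) together with a zero $0$, with product $(a)_{ij}\circ(b)_{kl}=(ap_{jk}b)_{il}$ if $p_{jk}\neq 0$ and $0$ otherwise. It is regular if every row and every column of $P$ has a nonzero entry. Given $\sigma$, extend by $\sigma(0)=0$; the standard representations are: $\pi^l((a)_{ij})\in M_{mk}(\mathbb{C})$ is the $m\times m$ block matrix (blocks of size $k$) whose $(i,l)$ block is $\sigma(ap_{jl})$ for $l\in I$ and all other blocks zero (i.e. $\sigma$ applied entrywise to $(a)_{ij}P$); $\pi^r((a)_{ij})\in M_{nk}(\mathbb{C})$ is the $n\times n$ block matrix whose $(l,j)$ block is $\sigma(p_{li}a)$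 for $l\in J$ and others zero (i.e. $\sigma$ applied to $P(a)_{ij}$); both send $0$ to $0$. A matrix representation $\pi$ is semiunitary if $\pi(s)\pi(s)^{*}\pi(s)=\pi(s)$ for all $s$ ($^{*}$ = conjugate transpose). $E$ is the identity matrix. A semigroup is inverse if every element $a$ has a unique $b$ with $aba=a$, $bab=b$. *)

theory Defs
  imports "HOL-Algebra.Group" "Jordan_Normal_Form.Schur_Decomposition"
begin

(* Rees matrix semigroup M^0(I,J,G,P), I = {0..<m}, J = {0..<n} (0-based indices).
   G^0 = G \<union> {0} is modelled as 'g option: None = 0, Some a = a.
   P is given as p :: nat \<Rightarrow> nat \<Rightarrow> 'g option with p j i = p_{ji} (j \<in> J, i \<in> I).
   Elements of S: None = zero, Some (a,i,j) = (a)_{ij}. *)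

definition rees_carrier :: "('g,'b) monoid_scheme \<Rightarrow> nat \<Rightarrow> nat \<Rightarrow> ('g \<times> nat \<times> nat) option set" where
  "rees_carrier G m n = insert None {Some (a,i,j) | a i j. a \<in> carrier G \<and> i < m \<and> j < n}"

definition rees_mult :: "('g,'b) monoid_scheme \<Rightarrow> (nat \<Rightarrow> nat \<Rightarrow> 'g option) \<Rightarrow>
    ('g \<times> nat \<times> nat) option \<Rightarrow> ('g \<times> nat \<times> nat) option \<Rightarrow> ('g \<times> nat \<times> nat) option" where
  "rees_mult G p x y = (case x of None \<Rightarrow> None | Some (a,i,j) \<Rightarrow>
      (case y of None \<Rightarrow> None | Some (b,k,l) \<Rightarrow>
        (case p j k of None \<Rightarrow> None | Some c \<Rightarrow> Some (a \<otimes>\<^bsub>G\<^esub> c \<otimes>\<^bsub>G\<^esub> b, i, l))))"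

definition sandwich_matrix :: "('g,'b) monoid_scheme \<Rightarrow> nat \<Rightarrow> nat \<Rightarrow> (nat \<Rightarrow> nat \<Rightarrow> 'g option) \<Rightarrow> bool" where
  "sandwich_matrix G m n p \<longleftrightarrow> (\<forall>j<n. \<forall>i<m. p j i \<in> insert None (Some ` carrier G))"

definition rees_regular :: "nat \<Rightarrow> nat \<Rightarrow> (nat \<Rightarrow> nat \<Rightarrow> 'g option) \<Rightarrow> bool" where
  "rees_regular m n p \<longleftrightarrow> (\<forall>j<n. \<exists>i<m. p j i \<noteq> None) \<and> (\<forall>i<m. \<exists>j<n. p j i \<noteq> None)"

definition matrix_rep :: "('g,'b) monoid_scheme \<Rightarrow> nat \<Rightarrow> ('g \<Rightarrow> complex mat) \<Rightarrow> bool" where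
  "matrix_rep G k \<sigma> \<longleftrightarrow>
     (\<forall>a\<in>carrier G. \<sigma> a \<in> carrier_mat k k \<and> invertible_mat (\<sigma> a)) \<and>
     (\<forall>a\<in>carrier G. \<forall>b\<in>carrier G. \<sigma> (a \<otimes>\<^bsub>G\<^esub> b) = \<sigma> a * \<sigma> b)"

definition sigma0 :: "nat \<Rightarrow> ('g \<Rightarrow> complex mat) \<Rightarrow> 'g option \<Rightarrow> complex mat" where
  "sigma0 k \<sigma> x = (case x of None \<Rightarrow> 0\<^sub>m k k | Some a \<Rightarrow> \<sigma> a)"

definition lmul0 :: "('g,'b) monoid_scheme \<Rightarrow> 'g \<Rightarrow> 'g option \<Rightarrow> 'g option" where
  "lmul0 G a x = map_option (\<lambda>c. a \<otimes>\<^bsub>G\<^esub> c) x"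

definition rmul0 :: "('g,'b) monoid_scheme \<Rightarrow> 'g option \<Rightarrow> 'g \<Rightarrow> 'g option" where
  "rmul0 G x a = map_option (\<lambda>c. c \<otimes>\<^bsub>G\<^esub> a) x"

(* pi^l((a)_{ij}): m x m block matrix (blocks k x k), (i,l) block sigma(a p_{jl}), others zero *)
definition pi_left :: "('g,'b) monoid_scheme \<Rightarrow> nat \<Rightarrow> nat \<Rightarrow> (nat \<Rightarrow> nat \<Rightarrow> 'g option) \<Rightarrow> ('g \<Rightarrow> complex mat)
    \<Rightarrow> ('g \<times> nat \<times> nat) option \<Rightarrow> complex mat" where
  "pi_left G m k p \<sigma> s = (case s of None \<Rightarrow> 0\<^sub>m (m*k) (m*k) | Some (a,i,j) \<Rightarrow>
     mat (m*k) (m*k) (\<lambda>(r,c). if r div k = i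
        then sigma0 k \<sigma> (lmul0 G a (p j (c div k))) $$ (r mod k, c mod k) else 0))"

(* pi^r((a)_{ij}): n x n block matrix, (l,j) block sigma(p_{li} a), others zero *)
definition pi_right :: "('g,'b) monoid_scheme \<Rightarrow> nat \<Rightarrow> nat \<Rightarrow> (nat \<Rightarrow> nat \<Rightarrow> 'g option) \<Rightarrow> ('g \<Rightarrow> complex mat)
    \<Rightarrow> ('g \<times> nat \<times> nat) option \<Rightarrow> complex mat" where
  "pi_right G n k p \<sigma> s = (case s of None \<Rightarrow> 0\<^sub>m (n*k) (n*k) | Some (a,i,j) \<Rightarrow>
     mat (n*k) (n*k) (\<lambda>(r,c). if c div k = j
        then sigma0 k \<sigma> (rmul0 G (p (r div k) i) a) $$ (r mod k, c mod k) else 0))"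

definition semiunitary :: "'s set \<Rightarrow> ('s \<Rightarrow> complex mat) \<Rightarrow> bool" where
  "semiunitary S \<pi> \<longleftrightarrow> (\<forall>s\<in>S. \<pi> s * mat_adjoint (\<pi> s) * \<pi> s = \<pi> s)"

definition inverse_semigroup :: "'s set \<Rightarrow> ('s \<Rightarrow> 's \<Rightarrow> 's) \<Rightarrow> bool" where
  "inverse_semigroup S f \<longleftrightarrow> (\<forall>a\<in>S. \<exists>!b. b \<in> S \<and> f (f a b) a = a \<and> f (f b a) b = b)"

end

theory Submission
  imports Defs
begin

text \<open>
  The matrix pi^l((a)_ij) vanishes outside block row i, where it is R = (sigma(a p_jl))_l,
  so semiunitarity says R R^* R = R: the Gram matrix sum_l sigma(a p_jl) sigma(a p_jl)^*
  fixes every block sigma(a p_jl) from the left; dually for pi^r and block columns.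
  In the normalised first row the Gram matrix is c sigma(a) sigma(a)^*, c the number of ones;
  a = 1 forces c = 1, and cancelling the invertible sigma(a) gives unitarity. For unitary
  sigma and a = 1 the Gram matrix of row j (column i) is the number of its nonzero entries
  times E, so every row and column of P has exactly one nonzero entry. Then (a)_ij has the
  unique inverse (p_ji'^-1 a^-1 p_j'i^-1)_i'j', where p_ji' and p_j'i are the nonzero
  entries of row j and column i.
\<close>

lemma mat_adjoint_eq_mat:
  "mat_adjoint A = mat (dim_col A) (dim_row A) (\<lambda>(i,j). conjugate (A $$ (j,i)))"
  unfolding mat_adjoint_def by (rule eq_matI) (auto simp: mat_of_rows_def)

lemma mat_adjoint_carrier: "A \<in> carrier_mat nr nc \<Longrightarrow> mat_adjoint A \<in> carrier_mat nc nr"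
  by (simp add: mat_adjoint_eq_mat)

lemma conjugate_one: "conjugate (1 :: 'a :: conjugatable_field) = 1"
proof -
  have "conjugate (1::'a) * conjugate 1 = conjugate 1"
    by (simp flip: conjugate_dist_mul)
  moreover have "conjugate (1::'a) \<noteq> 0" by simp
  ultimately show ?thesis by simp
qed

lemma mat_adjoint_one: "mat_adjoint (1\<^sub>m n :: 'a :: conjugatable_field mat) = 1\<^sub>m n"
  by (rule eq_matI) (auto simp: mat_adjoint_eq_mat conjugate_one)

lemma mat_adjoint_zero: "mat_adjoint (0\<^sub>m nr nc :: 'a :: conjugatable_field mat) = 0\<^sub>m nc nr"
  by (rule eq_matI) (auto simp: mat_adjoint_eq_mat)

lemma mult_mat_adjoint_entry:
  "i < dim_row A \<Longrightarrow> j < dim_row A \<Longrightarrow>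
   (A * mat_adjoint A) $$ (i,j) = (\<Sum>v<dim_col A. A $$ (i,v) * conjugate (A $$ (j,v)))"
  by (simp add: mat_adjoint_eq_mat scalar_prod_def atLeast0LessThan)

lemma mat_adjoint_mult_entry:
  "i < dim_col A \<Longrightarrow> j < dim_col A \<Longrightarrow>
   (mat_adjoint A * A) $$ (i,j) = (\<Sum>u<dim_row A. conjugate (A $$ (u,i)) * A $$ (u,j))"
  by (simp add: mat_adjoint_eq_mat scalar_prod_def atLeast0LessThan)

lemma invertible_mat_carrier_inverse:
  assumes "A \<in> carrier_mat n n" and "invertible_mat A"
  obtains B where "B \<in> carrier_mat n n" and "A * B = 1\<^sub>m n" and "B * A = 1\<^sub>m n"
proof -
  from assms(2) obtain B where AB: "A * B = 1\<^sub>m (dim_row A)" and BA: "B * A = 1\<^sub>m (dim_row B)"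
    unfolding invertible_mat_def inverts_mat_def by blast
  have "dim_col B = n" using arg_cong[OF AB, of dim_col] assms(1) by simp
  moreover have "dim_row B = n" using arg_cong[OF BA, of dim_col] assms(1) by simp
  ultimately show ?thesis using that AB BA assms(1) by auto
qed

lemma invertible_mat_right_cancel_one:
  assumes A: "A \<in> carrier_mat n n" and "invertible_mat A"
    and C: "C \<in> carrier_mat n n" and "C * A = A"
  shows "C = 1\<^sub>m n"
proof -
  obtain B where B: "B \<in> carrier_mat n n" and AB: "A * B = 1\<^sub>m n"
    using invertible_mat_carrier_inverse[OF assms(1,2)] by blast
  have "C = C * (A * B)" using AB C by simp
  also have "\<dots> = (C * A) * B" using A B C by simp
  finally show ?thesis using \<open>C * A = A\<close> AB by simp
qed

lemma invertible_mat_left_cancel_one: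
  assumes A: "A \<in> carrier_mat n n" and "invertible_mat A"
    and C: "C \<in> carrier_mat n n" and "A * C = A"
  shows "C = 1\<^sub>m n"
proof -
  obtain B where B: "B \<in> carrier_mat n n" and BA: "B * A = 1\<^sub>m n"
    using invertible_mat_carrier_inverse[OF assms(1,2)] by blast
  have "C = (B * A) * C" using BA C by simp
  also have "\<dots> = B * (A * C)" using A B C by simp
  finally show ?thesis using \<open>A * C = A\<close> BA by simp
qed

lemma one_smult_mat [simp]: "1 \<cdot>\<^sub>m A = (A :: 'a :: semiring_1 mat)"
  by (rule eq_matI) auto

lemma smult_one_mat_eq_one: "n > 0 \<Longrightarrow> c \<cdot>\<^sub>m 1\<^sub>m n = (1\<^sub>m n :: 'a :: semiring_1 mat) \<Longrightarrow> c = 1"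
  by (drule arg_cong[where f = "\<lambda>A. A $$ (0,0)"]) simp

lemma sum_if_const:
  "(\<Sum>l<(m::nat). if P l then c else 0) = of_nat (card {l. l < m \<and> P l}) * (c :: 'a :: semiring_1)"
proof -
  have "(\<Sum>l\<in>{l \<in> {..<m}. P l}. c) = (\<Sum>l<m. if P l then c else 0)"
    by (rule sum.inter_filter) simp
  then show ?thesis by simp
qed

lemma block_index_less: "l < m \<Longrightarrow> v < k \<Longrightarrow> l * k + v < m * (k::nat)"
proof -
  assume "l < m" "v < k"
  then have "l * k + v < Suc l * k" by simp
  also have "\<dots> \<le> m * k" using \<open>l < m\<close> by (intro mult_le_mono1) simp
  finally show ?thesis .
qed

lemma sum_blocks:
  fixes f :: "nat \<Rightarrow> 'a :: comm_monoid_add"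
  shows "(\<Sum>t<m * k. f t) = (\<Sum>l<m. \<Sum>v<k. f (l * k + v))"
proof (induction m)
  case (Suc m)
  have "(\<Sum>t<Suc m * k. f t) = (\<Sum>t<m * k. f t) + (\<Sum>t\<in>{m * k..<m * k + k}. f t)"
    by (simp add: lessThan_atLeast0 sum.atLeastLessThan_concat add.commute)
  also have "(\<Sum>t\<in>{m * k..<m * k + k}. f t) = (\<Sum>v<k. f (m * k + v))"
    by (simp add: sum.shift_bounds_nat_ivl[where m = 0 and k = "m * k", simplified]
        lessThan_atLeast0 add.commute)
  finally show ?case using Suc by simp
qed simp

lemma sum_single_block:
  fixes f :: "nat \<Rightarrow> 'a :: comm_monoid_add"
  assumes "i < m" and "\<And>t. t < m * k \<Longrightarrow> t div k \<noteq> i \<Longrightarrow> f t = 0"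
  shows "(\<Sum>t<m * k. f t) = (\<Sum>v<k. f (i * k + v))"
proof -
  have "(\<Sum>l<m. \<Sum>v<k. f (l * k + v)) =
      (\<Sum>v<k. f (i * k + v)) + (\<Sum>l\<in>{..<m} - {i}. \<Sum>v<k. f (l * k + v))"
    using assms(1) by (subst sum.remove[of _ i]) auto
  also have "(\<Sum>l\<in>{..<m} - {i}. \<Sum>v<k. f (l * k + v)) = 0"
    using assms(2) block_index_less by (intro sum.neutral ballI) auto
  finally show ?thesis by (simp add: sum_blocks)
qed

definition block_row_mat :: "nat \<Rightarrow> nat \<Rightarrow> nat \<Rightarrow> (nat \<Rightarrow> 'a mat) \<Rightarrow> 'a :: zero mat" where
  "block_row_mat m k i F = mat (m * k) (m * k)
     (\<lambda>(r,c). if r div k = i then F (c div k) $$ (r mod k, c mod k) else 0)"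

definition block_col_mat :: "nat \<Rightarrow> nat \<Rightarrow> nat \<Rightarrow> (nat \<Rightarrow> 'a mat) \<Rightarrow> 'a :: zero mat" where
  "block_col_mat n k j F = mat (n * k) (n * k)
     (\<lambda>(r,c). if c div k = j then F (r div k) $$ (r mod k, c mod k) else 0)"

lemma block_row_mat_dim [simp]:
  "dim_row (block_row_mat m k i F) = m * k" "dim_col (block_row_mat m k i F) = m * k"
  by (simp_all add: block_row_mat_def)

lemma block_col_mat_dim [simp]:
  "dim_row (block_col_mat n k j F) = n * k" "dim_col (block_col_mat n k j F) = n * k"
  by (simp_all add: block_col_mat_def)

lemma block_row_mat_entry [simp]:
  "r < m * k \<Longrightarrow> c < m * k \<Longrightarrow>
   block_row_mat m k i F $$ (r,c) = (if r div k = i then F (c div k) $$ (r mod k, c mod k) else 0)"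
  by (simp add: block_row_mat_def)

lemma block_col_mat_entry [simp]:
  "r < n * k \<Longrightarrow> c < n * k \<Longrightarrow>
   block_col_mat n k j F $$ (r,c) = (if c div k = j then F (r div k) $$ (r mod k, c mod k) else 0)"
  by (simp add: block_col_mat_def)

text \<open>\<open>block_row_gram m k F\<close> is R R^* for the block row R = (F 0 ... F (m - 1)), and
  \<open>block_col_gram n k F\<close> is C^* C for the corresponding block column C.\<close>

definition block_row_gram :: "nat \<Rightarrow> nat \<Rightarrow> (nat \<Rightarrow> 'a :: conjugatable_field mat) \<Rightarrow> 'a mat" where
  "block_row_gram m k F = mat k k (\<lambda>(x,x'). \<Sum>l<m. (F l * mat_adjoint (F l)) $$ (x,x'))"

definition block_col_gram :: "nat \<Rightarrow> nat \<Rightarrow> (nat \<Rightarrow> 'a :: conjugatable_field mat) \<Rightarrow> 'a mat" where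
  "block_col_gram n k F = mat k k (\<lambda>(y',y). \<Sum>l<n. (mat_adjoint (F l) * F l) $$ (y',y))"

lemma block_row_mat_mult_adjoint_entry:
  fixes F :: "nat \<Rightarrow> 'a :: conjugatable_field mat"
  assumes F: "\<And>l. l < m \<Longrightarrow> F l \<in> carrier_mat k k" and i: "i < m" and x: "x < k" and x': "x' < k"
  defines "X \<equiv> block_row_mat m k i F"
  shows "(X * mat_adjoint X) $$ (i * k + x, i * k + x') = block_row_gram m k F $$ (x,x')"
proof -
  have "(X * mat_adjoint X) $$ (i * k + x, i * k + x') =
      (\<Sum>t<m * k. X $$ (i * k + x, t) * conjugate (X $$ (i * k + x', t)))"
    using block_index_less[OF i x] block_index_less[OF i x']
    by (simp add: X_def block_index_less mult_mat_adjoint_entry)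
  also have "\<dots> = (\<Sum>l<m. \<Sum>v<k. F l $$ (x,v) * conjugate (F l $$ (x',v)))"
    unfolding sum_blocks using i x x'
    by (intro sum.cong refl) (simp add: X_def block_index_less)
  also have "\<dots> = block_row_gram m k F $$ (x,x')"
    using x x' by (simp add: block_row_gram_def)
      (intro sum.cong refl, simp add: mult_mat_adjoint_entry carrier_matD[OF F])
  finally show ?thesis .
qed

lemma block_row_mat_semiunitary_gram:
  fixes F :: "nat \<Rightarrow> 'a :: conjugatable_field mat"
  assumes F: "\<And>l. l < m \<Longrightarrow> F l \<in> carrier_mat k k" and i: "i < m" and l: "l < m"
  defines "X \<equiv> block_row_mat m k i F"
  assumes semi: "X * mat_adjoint X * X = X"
  shows "block_row_gram m k F * F l = F l"
proof (rule eq_matI)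
  fix x y assume "x < dim_row (F l)" "y < dim_col (F l)"
  then have x: "x < k" and y: "y < k" using F[OF l] by auto
  have "(block_row_gram m k F * F l) $$ (x,y) = (\<Sum>x'<k. block_row_gram m k F $$ (x,x') * F l $$ (x',y))"
    using x y F[OF l] by (simp add: block_row_gram_def scalar_prod_def atLeast0LessThan)
  also have "\<dots> = (\<Sum>x'<k. (X * mat_adjoint X) $$ (i * k + x, i * k + x') * X $$ (i * k + x', l * k + y))"
    using x y block_index_less[OF i] block_index_less[OF l y]
    by (intro sum.cong refl) (simp add: block_row_mat_mult_adjoint_entry[OF F i] X_def block_index_less)
  also have "\<dots> = (\<Sum>t<m * k. (X * mat_adjoint X) $$ (i * k + x, t) * X $$ (t, l * k + y))"
    by (rule sum_single_block[OF i, symmetric]) (simp add: X_def block_index_less[OF l y])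
  also have "\<dots> = (X * mat_adjoint X * X) $$ (i * k + x, l * k + y)"
    using block_index_less[OF i x] block_index_less[OF l y]
    by (simp add: X_def block_index_less mat_adjoint_eq_mat scalar_prod_def atLeast0LessThan)
  also have "\<dots> = F l $$ (x,y)"
    unfolding semi using x y block_index_less[OF i x] block_index_less[OF l y]
    by (simp add: X_def)
  finally show "(block_row_gram m k F * F l) $$ (x,y) = F l $$ (x,y)" .
qed (use F[OF l] in \<open>simp_all add: block_row_gram_def\<close>)

lemma block_col_mat_adjoint_mult_entry:
  fixes F :: "nat \<Rightarrow> 'a :: conjugatable_field mat"
  assumes F: "\<And>l. l < n \<Longrightarrow> F l \<in> carrier_mat k k" and j: "j < n" and y': "y' < k" and y: "y < k"
  defines "X \<equiv> block_col_mat n k j F"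
  shows "(mat_adjoint X * X) $$ (j * k + y', j * k + y) = block_col_gram n k F $$ (y',y)"
proof -
  have "(mat_adjoint X * X) $$ (j * k + y', j * k + y) =
      (\<Sum>t<n * k. conjugate (X $$ (t, j * k + y')) * X $$ (t, j * k + y))"
    using block_index_less[OF j y] block_index_less[OF j y']
    by (simp add: X_def mat_adjoint_mult_entry)
  also have "\<dots> = (\<Sum>l<n. \<Sum>u<k. conjugate (F l $$ (u,y')) * F l $$ (u,y))"
    unfolding sum_blocks using j y y'
    by (intro sum.cong refl) (simp add: X_def block_index_less)
  also have "\<dots> = block_col_gram n k F $$ (y',y)"
    using y y' by (simp add: block_col_gram_def)
      (intro sum.cong refl, simp add: mat_adjoint_mult_entry carrier_matD[OF F])
  finally show ?thesis .
qed

lemma block_col_mat_semiunitary_gram: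
  fixes F :: "nat \<Rightarrow> 'a :: conjugatable_field mat"
  assumes F: "\<And>l. l < n \<Longrightarrow> F l \<in> carrier_mat k k" and j: "j < n" and l: "l < n"
  defines "X \<equiv> block_col_mat n k j F"
  assumes semi: "X * mat_adjoint X * X = X"
  shows "F l * block_col_gram n k F = F l"
proof (rule eq_matI)
  fix x y assume "x < dim_row (F l)" "y < dim_col (F l)"
  then have x: "x < k" and y: "y < k" using F[OF l] by auto
  have X: "X \<in> carrier_mat (n * k) (n * k)" by (simp add: X_def carrier_matI)
  have "(F l * block_col_gram n k F) $$ (x,y) = (\<Sum>y'<k. F l $$ (x,y') * block_col_gram n k F $$ (y',y))"
    using x y F[OF l] by (simp add: block_col_gram_def scalar_prod_def atLeast0LessThan)
  also have "\<dots> = (\<Sum>y'<k. X $$ (l * k + x, j * k + y') * (mat_adjoint X * X) $$ (j * k + y', j * k + y))"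
    using x y block_index_less[OF j] block_index_less[OF l x]
    by (intro sum.cong refl) (simp add: block_col_mat_adjoint_mult_entry[OF F j] X_def)
  also have "\<dots> = (\<Sum>t<n * k. X $$ (l * k + x, t) * (mat_adjoint X * X) $$ (t, j * k + y))"
    by (rule sum_single_block[OF j, symmetric]) (simp add: X_def block_index_less[OF l x])
  also have "\<dots> = (X * (mat_adjoint X * X)) $$ (l * k + x, j * k + y)"
    using block_index_less[OF l x] block_index_less[OF j y]
    by (simp add: X_def mat_adjoint_eq_mat scalar_prod_def atLeast0LessThan)
  also have "\<dots> = F l $$ (x,y)"
    unfolding assoc_mult_mat[OF X mat_adjoint_carrier[OF X] X, symmetric] semi
    using x y block_index_less[OF l x] block_index_less[OF j y] by (simp add: X_def)
  finally show "(F l * block_col_gram n k F) $$ (x,y) = F l $$ (x,y)" .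
qed (use F[OF l] in \<open>simp_all add: block_col_gram_def\<close>)

lemma block_row_gram_eq_card_smult:
  assumes "\<And>l. l < m \<Longrightarrow> F l * mat_adjoint (F l) = (if P l then B else 0\<^sub>m k k)"
    and "B \<in> carrier_mat k k"
  shows "block_row_gram m k F = of_nat (card {l. l < m \<and> P l}) \<cdot>\<^sub>m B"
proof (rule eq_matI)
  fix x y assume "x < dim_row (of_nat (card {l. l < m \<and> P l}) \<cdot>\<^sub>m B)"
    and "y < dim_col (of_nat (card {l. l < m \<and> P l}) \<cdot>\<^sub>m B)"
  then have x: "x < k" and y: "y < k" using assms(2) by auto
  have "block_row_gram m k F $$ (x,y) = (\<Sum>l<m. if P l then B $$ (x,y) else 0)"
    using x y by (simp add: block_row_gram_def) (intro sum.cong refl, simp add: assms(1))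
  then show "block_row_gram m k F $$ (x,y) = (of_nat (card {l. l < m \<and> P l}) \<cdot>\<^sub>m B) $$ (x,y)"
    using x y assms(2) by (simp add: sum_if_const)
qed (use assms(2) in \<open>simp_all add: block_row_gram_def\<close>)

lemma block_col_gram_eq_card_smult:
  assumes "\<And>l. l < n \<Longrightarrow> mat_adjoint (F l) * F l = (if P l then B else 0\<^sub>m k k)"
    and "B \<in> carrier_mat k k"
  shows "block_col_gram n k F = of_nat (card {l. l < n \<and> P l}) \<cdot>\<^sub>m B"
proof (rule eq_matI)
  fix x y assume "x < dim_row (of_nat (card {l. l < n \<and> P l}) \<cdot>\<^sub>m B)"
    and "y < dim_col (of_nat (card {l. l < n \<and> P l}) \<cdot>\<^sub>m B)"
  then have x: "x < k" and y: "y < k" using assms(2) by auto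
  have "block_col_gram n k F $$ (x,y) = (\<Sum>l<n. if P l then B $$ (x,y) else 0)"
    using x y by (simp add: block_col_gram_def) (intro sum.cong refl, simp add: assms(1))
  then show "block_col_gram n k F $$ (x,y) = (of_nat (card {l. l < n \<and> P l}) \<cdot>\<^sub>m B) $$ (x,y)"
    using x y assms(2) by (simp add: sum_if_const)
qed (use assms(2) in \<open>simp_all add: block_col_gram_def\<close>)

lemma matrix_rep_carrier: "matrix_rep G k \<sigma> \<Longrightarrow> a \<in> carrier G \<Longrightarrow> \<sigma> a \<in> carrier_mat k k"
  and matrix_rep_invertible: "matrix_rep G k \<sigma> \<Longrightarrow> a \<in> carrier G \<Longrightarrow> invertible_mat (\<sigma> a)"
  by (simp_all add: matrix_rep_def)

lemma sandwich_matrix_entry_carrier: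
  "sandwich_matrix G m n p \<Longrightarrow> j < n \<Longrightarrow> i < m \<Longrightarrow> p j i = Some g \<Longrightarrow> g \<in> carrier G"
  unfolding sandwich_matrix_def by force

lemma matrix_rep_one:
  assumes "group G" and "matrix_rep G k \<sigma>"
  shows "\<sigma> \<one>\<^bsub>G\<^esub> = 1\<^sub>m k"
proof -
  interpret group G by fact
  have "\<sigma> \<one>\<^bsub>G\<^esub> * \<sigma> \<one>\<^bsub>G\<^esub> = \<sigma> \<one>\<^bsub>G\<^esub>"
    using assms(2) unfolding matrix_rep_def by (metis one_closed l_one)
  then show ?thesis
    using matrix_rep_carrier[OF assms(2) one_closed] matrix_rep_invertible[OF assms(2) one_closed]
    by (intro invertible_mat_right_cancel_one)
qed

lemma sigma0_carrier:
  "matrix_rep G k \<sigma> \<Longrightarrow> x \<in> insert None (Some ` carrier G) \<Longrightarrow> sigma0 k \<sigma> x \<in> carrier_mat k k"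
  by (auto simp: sigma0_def matrix_rep_carrier)

lemma lmul0_closed:
  "group G \<Longrightarrow> a \<in> carrier G \<Longrightarrow> x \<in> insert None (Some ` carrier G) \<Longrightarrow>
   lmul0 G a x \<in> insert None (Some ` carrier G)"
  by (auto simp: lmul0_def group.is_monoid monoid.m_closed)

lemma rmul0_closed:
  "group G \<Longrightarrow> a \<in> carrier G \<Longrightarrow> x \<in> insert None (Some ` carrier G) \<Longrightarrow>
   rmul0 G x a \<in> insert None (Some ` carrier G)"
  by (auto simp: rmul0_def group.is_monoid monoid.m_closed)

lemma Some_in_rees_carrier [simp]:
  "Some (a,i,j) \<in> rees_carrier G m n \<longleftrightarrow> a \<in> carrier G \<and> i < m \<and> j < n"
  by (simp add: rees_carrier_def)

lemma pi_left_Some: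
  "pi_left G m k p \<sigma> (Some (a,i,j)) = block_row_mat m k i (\<lambda>l. sigma0 k \<sigma> (lmul0 G a (p j l)))"
  by (simp add: pi_left_def block_row_mat_def)

lemma pi_right_Some:
  "pi_right G n k p \<sigma> (Some (a,i,j)) = block_col_mat n k j (\<lambda>l. sigma0 k \<sigma> (rmul0 G (p l i) a))"
  by (simp add: pi_right_def block_col_mat_def)

lemma pi_left_semiunitary_gram:
  assumes "group G" and "matrix_rep G k \<sigma>" and "sandwich_matrix G m n p"
    and "semiunitary (rees_carrier G m n) (pi_left G m k p \<sigma>)"
    and "a \<in> carrier G" and "j < n" and "l < m"
  defines "F \<equiv> \<lambda>l. sigma0 k \<sigma> (lmul0 G a (p j l))"
  shows "block_row_gram m k F * F l = F l"
proof (rule block_row_mat_semiunitary_gram)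
  show "F l \<in> carrier_mat k k" if "l < m" for l
  proof -
    have "p j l \<in> insert None (Some ` carrier G)"
      using assms(3,6) that unfolding sandwich_matrix_def by blast
    then show ?thesis
      unfolding F_def by (intro sigma0_carrier[OF assms(2)] lmul0_closed[OF assms(1,5)])
  qed
  show "block_row_mat m k 0 F * mat_adjoint (block_row_mat m k 0 F) * block_row_mat m k 0 F = block_row_mat m k 0 F"
    using assms(4-7) unfolding semiunitary_def F_def pi_left_Some[symmetric] by force
qed (use assms(7) in auto)

lemma pi_right_semiunitary_gram:
  assumes "group G" and "matrix_rep G k \<sigma>" and "sandwich_matrix G m n p"
    and "semiunitary (rees_carrier G m n) (pi_right G n k p \<sigma>)"
    and "a \<in> carrier G" and "i < m" and "l < n"
  defines "F \<equiv> \<lambda>l. sigma0 k \<sigma> (rmul0 G (p l i) a)"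
  shows "F l * block_col_gram n k F = F l"
proof (rule block_col_mat_semiunitary_gram)
  show "F l \<in> carrier_mat k k" if "l < n" for l
  proof -
    have "p l i \<in> insert None (Some ` carrier G)"
      using assms(3,6) that unfolding sandwich_matrix_def by blast
    then show ?thesis
      unfolding F_def by (intro sigma0_carrier[OF assms(2)] rmul0_closed[OF assms(1,5)])
  qed
  show "block_col_mat n k 0 F * mat_adjoint (block_col_mat n k 0 F) * block_col_mat n k 0 F = block_col_mat n k 0 F"
    using assms(4-7) unfolding semiunitary_def F_def pi_right_Some[symmetric] by force
qed (use assms(7) in auto)

lemma matrix_rep_unitary_if_pi_left_semiunitary:
  assumes G: "group G" and "m > 0" and "n > 0" and "k > 0"
    and "sandwich_matrix G m n p"
    and p00: "p 0 0 = Some \<one>\<^bsub>G\<^esub>" and p0: "\<forall>l<m. p 0 l \<in> {None, Some \<one>\<^bsub>G\<^esub>}"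
    and \<sigma>: "matrix_rep G k \<sigma>"
    and "semiunitary (rees_carrier G m n) (pi_left G m k p \<sigma>)"
    and a: "a \<in> carrier G"
  shows "\<sigma> a * mat_adjoint (\<sigma> a) = 1\<^sub>m k"
proof -
  interpret group G by fact
  define c where "c = card {l. l < m \<and> p 0 l = Some \<one>\<^bsub>G\<^esub>}"
  have gram: "(of_nat c \<cdot>\<^sub>m (\<sigma> b * mat_adjoint (\<sigma> b))) * \<sigma> b = \<sigma> b" if b: "b \<in> carrier G" for b
  proof -
    define F where "F l = sigma0 k \<sigma> (lmul0 G b (p 0 l))" for l
    have F: "F l = (if p 0 l = Some \<one>\<^bsub>G\<^esub> then \<sigma> b else 0\<^sub>m k k)" if "l < m" for l
      using p0 that b by (auto simp: F_def lmul0_def sigma0_def)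
    have "block_row_gram m k F = of_nat c \<cdot>\<^sub>m (\<sigma> b * mat_adjoint (\<sigma> b))"
      unfolding c_def using matrix_rep_carrier[OF \<sigma> b]
      by (intro block_row_gram_eq_card_smult) (auto simp: F mat_adjoint_zero mat_adjoint_carrier)
    then show ?thesis
      using pi_left_semiunitary_gram[OF G \<sigma> assms(5,9) b \<open>n > 0\<close> \<open>m > 0\<close>, folded F_def]
        F[OF \<open>m > 0\<close>] p00
      by simp
  qed
  have "of_nat c \<cdot>\<^sub>m 1\<^sub>m k = (1\<^sub>m k :: complex mat)"
    using gram[OF one_closed] by (simp add: matrix_rep_one[OF G \<sigma>] mat_adjoint_one)
  from smult_one_mat_eq_one[OF \<open>k > 0\<close> this] have "c = 1" by simp
  then have "(\<sigma> a * mat_adjoint (\<sigma> a)) * \<sigma> a = \<sigma> a"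
    using gram[OF a] by simp
  then show ?thesis
    using matrix_rep_carrier[OF \<sigma> a] matrix_rep_invertible[OF \<sigma> a]
    by (intro invertible_mat_right_cancel_one) (auto intro!: mult_carrier_mat mat_adjoint_carrier)
qed

lemma sandwich_row_card_eq_1_if_pi_left_semiunitary:
  assumes G: "group G" and "k > 0" and \<sigma>: "matrix_rep G k \<sigma>" and P: "sandwich_matrix G m n p"
    and "rees_regular m n p"
    and unitary: "\<And>a. a \<in> carrier G \<Longrightarrow> \<sigma> a * mat_adjoint (\<sigma> a) = 1\<^sub>m k"
    and semi: "semiunitary (rees_carrier G m n) (pi_left G m k p \<sigma>)"
    and j: "j < n"
  shows "card {l. l < m \<and> p j l \<noteq> None} = 1"
proof -
  interpret group G by fact
  obtain l g where l: "l < m" and g: "p j l = Some g"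
    using \<open>rees_regular m n p\<close> j unfolding rees_regular_def by blast
  note P_carrier = sandwich_matrix_entry_carrier[OF P j]
  define F where "F l = sigma0 k \<sigma> (lmul0 G \<one>\<^bsub>G\<^esub> (p j l))" for l
  have F: "F l = sigma0 k \<sigma> (p j l)" if "l < m" for l
    using P_carrier[OF that] by (cases "p j l") (auto simp: F_def lmul0_def)
  define r where "r = card {l. l < m \<and> p j l \<noteq> None}"
  have "block_row_gram m k F = of_nat r \<cdot>\<^sub>m 1\<^sub>m k"
    unfolding r_def
  proof (rule block_row_gram_eq_card_smult)
    show "F l * mat_adjoint (F l) = (if p j l \<noteq> None then 1\<^sub>m k else 0\<^sub>m k k)" if "l < m" for l
      using P_carrier[OF that] unitary
      by (cases "p j l") (simp_all add: F[OF that] sigma0_def mat_adjoint_zero)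
  qed simp
  then have "(of_nat r \<cdot>\<^sub>m 1\<^sub>m k) * \<sigma> g = \<sigma> g"
    using pi_left_semiunitary_gram[OF G \<sigma> P semi one_closed j l, folded F_def] F[OF l] g
    by (simp add: sigma0_def)
  then have "of_nat r \<cdot>\<^sub>m 1\<^sub>m k = (1\<^sub>m k :: complex mat)"
    using matrix_rep_carrier[OF \<sigma> P_carrier[OF l g]] matrix_rep_invertible[OF \<sigma> P_carrier[OF l g]]
    by (intro invertible_mat_right_cancel_one[of "\<sigma> g"]) auto
  from smult_one_mat_eq_one[OF \<open>k > 0\<close> this] show ?thesis by (simp add: r_def)
qed

lemma sandwich_col_card_eq_1_if_pi_right_semiunitary:
  assumes G: "group G" and "k > 0" and \<sigma>: "matrix_rep G k \<sigma>" and P: "sandwich_matrix G m n p"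
    and "rees_regular m n p"
    and unitary: "\<And>a. a \<in> carrier G \<Longrightarrow> \<sigma> a * mat_adjoint (\<sigma> a) = 1\<^sub>m k"
    and semi: "semiunitary (rees_carrier G m n) (pi_right G n k p \<sigma>)"
    and i: "i < m"
  shows "card {l. l < n \<and> p l i \<noteq> None} = 1"
proof -
  interpret group G by fact
  obtain l g where l: "l < n" and g: "p l i = Some g"
    using \<open>rees_regular m n p\<close> i unfolding rees_regular_def by blast
  have P_carrier: "h \<in> carrier G" if "l < n" "p l i = Some h" for l h
    using sandwich_matrix_entry_carrier[OF P that(1) i that(2)] .
  have unitary': "mat_adjoint (\<sigma> h) * \<sigma> h = 1\<^sub>m k" if "h \<in> carrier G" for h
    using matrix_rep_carrier[OF \<sigma> that]
    by (auto intro: mat_mult_left_right_inverse unitary[OF that] mat_adjoint_carrier)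
  define F where "F l = sigma0 k \<sigma> (rmul0 G (p l i) \<one>\<^bsub>G\<^esub>)" for l
  have F: "F l = sigma0 k \<sigma> (p l i)" if "l < n" for l
    using P_carrier[OF that] by (cases "p l i") (auto simp: F_def rmul0_def)
  define r where "r = card {l. l < n \<and> p l i \<noteq> None}"
  have "block_col_gram n k F = of_nat r \<cdot>\<^sub>m 1\<^sub>m k"
    unfolding r_def
  proof (rule block_col_gram_eq_card_smult)
    show "mat_adjoint (F l) * F l = (if p l i \<noteq> None then 1\<^sub>m k else 0\<^sub>m k k)" if "l < n" for l
      using P_carrier[OF that] unitary'
      by (cases "p l i") (simp_all add: F[OF that] sigma0_def mat_adjoint_zero)
  qed simp
  then have "\<sigma> g * (of_nat r \<cdot>\<^sub>m 1\<^sub>m k) = \<sigma> g"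
    using pi_right_semiunitary_gram[OF G \<sigma> P semi one_closed i l, folded F_def] F[OF l] g
    by (simp add: sigma0_def)
  then have "of_nat r \<cdot>\<^sub>m 1\<^sub>m k = (1\<^sub>m k :: complex mat)"
    using matrix_rep_carrier[OF \<sigma> P_carrier[OF l g]] matrix_rep_invertible[OF \<sigma> P_carrier[OF l g]]
    by (intro invertible_mat_left_cancel_one[of "\<sigma> g"]) auto
  from smult_one_mat_eq_one[OF \<open>k > 0\<close> this] show ?thesis by (simp add: r_def)
qed

lemma (in group) sandwich_eq_self_iff:
  assumes "a \<in> carrier G" "g \<in> carrier G" "c \<in> carrier G" "h \<in> carrier G"
  shows "a \<otimes> g \<otimes> c \<otimes> h \<otimes> a = a \<longleftrightarrow> c = inv g \<otimes> inv a \<otimes> inv h"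
proof -
  have "a \<otimes> g \<otimes> c \<otimes> h \<otimes> a = a \<longleftrightarrow> (g \<otimes> c) \<otimes> (h \<otimes> a) = \<one>"
    using assms by (simp add: m_assoc)
  also have "\<dots> \<longleftrightarrow> g \<otimes> c = inv (h \<otimes> a)"
    using assms by (metis inv_equality l_inv m_closed)
  also have "\<dots> \<longleftrightarrow> c = inv g \<otimes> inv (h \<otimes> a)"
    using assms by (metis inv_closed inv_solve_left m_closed)
  finally show ?thesis
    using assms by (simp add: inv_mult_group m_assoc)
qed

lemma (in group) sandwich_inverse_eq_self:
  assumes "a \<in> carrier G" "g \<in> carrier G" "h \<in> carrier G"
  defines "c \<equiv> inv g \<otimes> inv a \<otimes> inv h"
  shows "c \<otimes> h \<otimes> a \<otimes> g \<otimes> c = c"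
proof -
  have c_inv: "c = inv (h \<otimes> a \<otimes> g)"
    using assms(1-3) by (simp add: c_def inv_mult_group m_assoc)
  have "c \<otimes> h \<otimes> a \<otimes> g \<otimes> c = (c \<otimes> (h \<otimes> a \<otimes> g)) \<otimes> c"
    using assms(1-3) c_inv by (simp add: m_assoc)
  also have "\<dots> = c"
    unfolding c_inv using assms(1-3) by simp
  finally show ?thesis .
qed

definition monomial_sandwich :: "nat \<Rightarrow> nat \<Rightarrow> (nat \<Rightarrow> nat \<Rightarrow> 'g option) \<Rightarrow> bool" where
  "monomial_sandwich m n p \<longleftrightarrow>
     (\<forall>j<n. card {i. i < m \<and> p j i \<noteq> None} = 1) \<and>
     (\<forall>i<m. card {j. j < n \<and> p j i \<noteq> None} = 1)"

lemma monomial_sandwich_rowE: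
  assumes "monomial_sandwich m n p" and "j < n"
  obtains i g where "i < m" and "p j i = Some g" and "\<And>l. l < m \<Longrightarrow> p j l \<noteq> None \<Longrightarrow> l = i"
proof -
  from assms obtain i where "{l. l < m \<and> p j l \<noteq> None} = {i}"
    unfolding monomial_sandwich_def by (metis One_nat_def card_1_singleton_iff)
  then show ?thesis using that by blast
qed

lemma monomial_sandwich_colE:
  assumes "monomial_sandwich m n p" and "i < m"
  obtains j g where "j < n" and "p j i = Some g" and "\<And>l. l < n \<Longrightarrow> p l i \<noteq> None \<Longrightarrow> l = j"
proof -
  from assms obtain j where "{l. l < n \<and> p l i \<noteq> None} = {j}"
    unfolding monomial_sandwich_def by (metis One_nat_def card_1_singleton_iff)
  then show ?thesis using that by blast
qed

lemma rees_mult_Some_Some [simp]: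
  "rees_mult G p (Some (a,i,j)) (Some (b,k,l)) =
   map_option (\<lambda>c. (a \<otimes>\<^bsub>G\<^esub> c \<otimes>\<^bsub>G\<^esub> b, i, l)) (p j k)"
  by (simp add: rees_mult_def split: option.split)

lemma rees_mult_None [simp]: "rees_mult G p None x = None" "rees_mult G p x None = None"
  by (simp_all add: rees_mult_def split: option.split)

lemma (in group) rees_unique_inverse_of_nonzero:
  assumes P: "sandwich_matrix G m n p" and monomial: "monomial_sandwich m n p"
    and a: "a \<in> carrier G" and i: "i < m" and j: "j < n"
  defines "s \<equiv> Some (a, i, j)"
  shows "\<exists>!b. b \<in> rees_carrier G m n \<and> rees_mult G p (rees_mult G p s b) s = s
              \<and> rees_mult G p (rees_mult G p b s) b = b"
proof -
  obtain i' g where i': "i' < m" and g: "p j i' = Some g"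
    and row: "\<And>l. l < m \<Longrightarrow> p j l \<noteq> None \<Longrightarrow> l = i'"
    using monomial_sandwich_rowE[OF monomial j] by blast
  obtain j' h where j': "j' < n" and h: "p j' i = Some h"
    and col: "\<And>l. l < n \<Longrightarrow> p l i \<noteq> None \<Longrightarrow> l = j'"
    using monomial_sandwich_colE[OF monomial i] by blast
  have gh: "g \<in> carrier G" "h \<in> carrier G"
    using sandwich_matrix_entry_carrier[OF P] i i' j j' g h by blast+
  define c where "c = inv g \<otimes> inv a \<otimes> inv h"
  have c: "c \<in> carrier G" using a gh by (simp add: c_def)
  have sbs: "a \<otimes> g \<otimes> c \<otimes> h \<otimes> a = a"
    using sandwich_eq_self_iff[OF a gh(1) c gh(2)] by (simp add: c_def)
  have bsb: "c \<otimes> h \<otimes> a \<otimes> g \<otimes> c = c"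
    using sandwich_inverse_eq_self[OF a gh] by (simp add: c_def)
  show ?thesis
  proof (rule ex1I[of _ "Some (c, i', j')"])
    show "Some (c, i', j') \<in> rees_carrier G m n \<and> rees_mult G p (rees_mult G p s (Some (c, i', j'))) s = s
        \<and> rees_mult G p (rees_mult G p (Some (c, i', j')) s) (Some (c, i', j')) = Some (c, i', j')"
      using c i' j' g h sbs bsb by (simp add: s_def)
  next
    fix b assume "b \<in> rees_carrier G m n \<and> rees_mult G p (rees_mult G p s b) s = s
        \<and> rees_mult G p (rees_mult G p b s) b = b"
    then obtain c' i2 j2 where b: "b = Some (c', i2, j2)" and c': "c' \<in> carrier G"
      and i2: "i2 < m" and j2: "j2 < n" and sbs': "rees_mult G p (rees_mult G p s b) s = s"
      by (cases b) (auto simp: rees_carrier_def s_def)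
    then obtain g' h' where g': "p j i2 = Some g'" and h': "p j2 i = Some h'"
      by (cases "p j i2"; cases "p j2 i") (auto simp: s_def)
    have "i2 = i'" "j2 = j'" using row col i2 j2 g' h' by auto
    then have "a \<otimes> g \<otimes> c' \<otimes> h \<otimes> a = a" using sbs' g h g' h' by (simp add: b s_def)
    then have "c' = c"
      using sandwich_eq_self_iff[OF a gh(1) c' gh(2)] by (simp add: c_def)
    then show "b = Some (c, i', j')" using b \<open>i2 = i'\<close> \<open>j2 = j'\<close> by simp
  qed
qed

lemma rees_inverse_semigroup_if_monomial:
  assumes "group G" and "sandwich_matrix G m n p" and "monomial_sandwich m n p"
  shows "inverse_semigroup (rees_carrier G m n) (rees_mult G p)"
  unfolding inverse_semigroup_def
proof
  fix s assume "s \<in> rees_carrier G m n"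
  then consider "s = None" | a i j where "s = Some (a, i, j)" "a \<in> carrier G" "i < m" "j < n"
    by (auto simp: rees_carrier_def)
  then show "\<exists>!b. b \<in> rees_carrier G m n \<and> rees_mult G p (rees_mult G p s b) s = s
      \<and> rees_mult G p (rees_mult G p b s) b = b"
  proof cases
    case 1
    then show ?thesis by (intro ex1I[of _ None]) (auto simp: rees_carrier_def)
  next
    case 2
    then show ?thesis using group.rees_unique_inverse_of_nonzero[OF assms] by simp
  qed
qed

theorem mainTheorem6:
  fixes G :: "('g,'b) monoid_scheme"
    and m n k :: nat
    and p :: "nat \<Rightarrow> nat \<Rightarrow> 'g option"
    and \<sigma> :: "'g \<Rightarrow> complex mat"
  assumes "group G" and "finite (carrier G)"
    and "m > 0" and "n > 0" and "k > 0"
    and "sandwich_matrix G m n p"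
    and "rees_regular m n p"
    and "p 0 0 = Some \<one>\<^bsub>G\<^esub>"
    and "\<forall>l<m. p 0 l \<in> {None, Some \<one>\<^bsub>G\<^esub>}"
    and "matrix_rep G k \<sigma>"
    and "semiunitary (rees_carrier G m n) (pi_left G m k p \<sigma>)"
    and "semiunitary (rees_carrier G m n) (pi_right G n k p \<sigma>)"
  shows "(\<forall>a\<in>carrier G. \<sigma> a * mat_adjoint (\<sigma> a) = 1\<^sub>m k) \<and>
         inverse_semigroup (rees_carrier G m n) (rees_mult G p)"
proof -
  have unitary: "\<And>a. a \<in> carrier G \<Longrightarrow> \<sigma> a * mat_adjoint (\<sigma> a) = 1\<^sub>m k"
    using matrix_rep_unitary_if_pi_left_semiunitary[OF assms(1,3,4,5,6,8,9,10,11)] .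
  have "monomial_sandwich m n p"
    unfolding monomial_sandwich_def
    using sandwich_row_card_eq_1_if_pi_left_semiunitary[OF assms(1,5,10,6,7) unitary assms(11)]
      sandwich_col_card_eq_1_if_pi_right_semiunitary[OF assms(1,5,10,6,7) unitary assms(12)]
    by blast
  then show ?thesis
    using unitary rees_inverse_semigroup_if_monomial[OF assms(1,6)] by blast
qed

end
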